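(* Let $D$ and $H$ be digraphs such that $H$ is equivalent to $D$ under source-sink identification. Then $\operatorname{dbw}(H)=\operatorname{dbw}(D)$.
   Context: All digraphs are finite and loopless, without parallel edges. A source is a vertex with no incoming edges, a sink a vertex with no outgoing edges. Two vertices $x\neq y$ are source/sink-identifiable if both are sources or both are sinks. Identifying them means replacing $x,y$ by a single new vertex $\gamma$ with in-neighbourhood $N^-(x)\cup N^-(y)$ and out-neighbourhood $N^+(x)\cup N^+(y)$. $H$ is equivalent to $D$ under source-sink identification if $H$ is obtained from $D$ by a finite sequence of identifications of source/sink-identifiable pairs. Directed branch-width: for $X\subseteq E(D)$, $S^V_X=\{y: \exists x,z,\ \vec{xy}\in E(D)\setminus X,\ \vec{yz}\in X\}$, $f_D(X)=|S^V_X\cup S^V_{E(D)\setminus X}|$; a directed branch decomposition is $(T,\beta)$ with $T$ a tree of maximum degree at most three and $\beta$ a bijection from the leaves of $T$ onto $E(D)$; the order of a tree edge is $f_D(\beta(Y))$ for $Y$ the leaves on one side; the width is the maximum order (0 if none), and $\operatorname{dbw}(D)$ is the minimum width. *)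

theory Defs
  imports Main
begin

text \<open>A digraph is a pair (V, E) with finite vertex set V and arc set E \<subseteq> V \<times> V,
  loopless; parallel arcs are excluded since E is a set.\<close>
type_synonym 'a digraph = "'a set \<times> ('a \<times> 'a) set"

definition digraph :: "'a digraph \<Rightarrow> bool" where
  "digraph D \<longleftrightarrow> finite (fst D) \<and> snd D \<subseteq> fst D \<times> fst D \<and> (\<forall>v. (v, v) \<notin> snd D)"

definition in_nbhd :: "'a digraph \<Rightarrow> 'a \<Rightarrow> 'a set" where
  "in_nbhd D v = {u. (u, v) \<in> snd D}"

definition out_nbhd :: "'a digraph \<Rightarrow> 'a \<Rightarrow> 'a set" where
  "out_nbhd D v = {w. (v, w) \<in> snd D}"

definition is_source :: "'a digraph \<Rightarrow> 'a \<Rightarrow> bool" where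
  "is_source D v \<longleftrightarrow> v \<in> fst D \<and> in_nbhd D v = {}"

definition is_sink :: "'a digraph \<Rightarrow> 'a \<Rightarrow> bool" where
  "is_sink D v \<longleftrightarrow> v \<in> fst D \<and> out_nbhd D v = {}"

definition ss_identifiable :: "'a digraph \<Rightarrow> 'a \<Rightarrow> 'a \<Rightarrow> bool" where
  "ss_identifiable D x y \<longleftrightarrow> x \<noteq> y \<and>
     ((is_source D x \<and> is_source D y) \<or> (is_sink D x \<and> is_sink D y))"

text \<open>Identify x and y into a new vertex g (g must not be a vertex of D other than x, y).\<close>
definition identify :: "'a digraph \<Rightarrow> 'a \<Rightarrow> 'a \<Rightarrow> 'a \<Rightarrow> 'a digraph" where
  "identify D x y g =
     (insert g (fst D - {x, y}),
      {(u, w). (u, w) \<in> snd D \<and> u \<notin> {x, y} \<and> w \<notin> {x, y}}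
      \<union> {(u, g) | u. u \<in> in_nbhd D x \<union> in_nbhd D y}
      \<union> {(g, w) | w. w \<in> out_nbhd D x \<union> out_nbhd D y})"

definition ss_step :: "'a digraph \<Rightarrow> 'a digraph \<Rightarrow> bool" where
  "ss_step D D' \<longleftrightarrow> (\<exists>x y g. ss_identifiable D x y \<and> g \<notin> fst D - {x, y}
                              \<and> D' = identify D x y g)"

definition ss_equiv :: "'a digraph \<Rightarrow> 'a digraph \<Rightarrow> bool" where
  "ss_equiv H D \<longleftrightarrow> ss_step\<^sup>*\<^sup>* D H"

definition SV :: "'a digraph \<Rightarrow> ('a \<times> 'a) set \<Rightarrow> 'a set" where
  "SV D X = {y. \<exists>x z. (x, y) \<in> snd D - X \<and> (y, z) \<in> X}"

definition fD :: "'a digraph \<Rightarrow> ('a \<times> 'a) set \<Rightarrow> nat" where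
  "fD D X = card (SV D X \<union> SV D (snd D - X))"

definition tadj :: "nat set set \<Rightarrow> (nat \<times> nat) set" where
  "tadj TE = {(u, v). {u, v} \<in> TE}"

definition is_tree :: "nat set \<Rightarrow> nat set set \<Rightarrow> bool" where
  "is_tree N TE \<longleftrightarrow> finite N \<and> N \<noteq> {} \<and>
     (\<forall>e\<in>TE. card e = 2 \<and> e \<subseteq> N) \<and>
     (\<forall>a\<in>N. \<forall>b\<in>N. (a, b) \<in> (tadj TE)\<^sup>*) \<and>
     card TE = card N - 1"

definition tdeg :: "nat set set \<Rightarrow> nat \<Rightarrow> nat" where
  "tdeg TE v = card {e\<in>TE. v \<in> e}"

definition tleaves :: "nat set \<Rightarrow> nat set set \<Rightarrow> nat set" where
  "tleaves N TE = {v\<in>N. tdeg TE v \<le> 1}"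

definition is_dbd :: "'a digraph \<Rightarrow> nat set \<Rightarrow> nat set set \<Rightarrow> (nat \<Rightarrow> 'a \<times> 'a) \<Rightarrow> bool" where
  "is_dbd D N TE \<beta> \<longleftrightarrow> is_tree N TE \<and> (\<forall>v\<in>N. tdeg TE v \<le> 3) \<and>
     bij_betw \<beta> (tleaves N TE) (snd D)"

definition side_leaves :: "nat set \<Rightarrow> nat set set \<Rightarrow> nat set \<Rightarrow> nat \<Rightarrow> nat set" where
  "side_leaves N TE e a = {v \<in> tleaves N TE. (a, v) \<in> (tadj (TE - {e}))\<^sup>*}"

definition tedge_order :: "'a digraph \<Rightarrow> nat set \<Rightarrow> nat set set \<Rightarrow> (nat \<Rightarrow> 'a \<times> 'a) \<Rightarrow> nat set \<Rightarrow> nat" where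
  "tedge_order D N TE \<beta> e = fD D (\<beta> ` side_leaves N TE e (SOME a. a \<in> e))"

definition dbd_width :: "'a digraph \<Rightarrow> nat set \<Rightarrow> nat set set \<Rightarrow> (nat \<Rightarrow> 'a \<times> 'a) \<Rightarrow> nat" where
  "dbd_width D N TE \<beta> = Max (insert 0 (tedge_order D N TE \<beta> ` TE))"

text \<open>If D has no arcs there is no decomposition; by convention dbw is then 0.\<close>
definition dbw :: "'a digraph \<Rightarrow> nat" where
  "dbw D = (if snd D = {} then 0
            else (LEAST k. \<exists>N TE \<beta>. is_dbd D N TE \<beta> \<and> dbd_width D N TE \<beta> = k))"

end

theory Submission
  imports Defs
begin

text \<open>Directed branch-width depends only on the arc set, and identifying two sinks is
  identifying two sources in the converse digraph, which has the same width. When two sources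
  \<open>x\<close> and \<open>y\<close> are identified, an arc \<open>(y, w)\<close> collapses onto \<open>(x, w)\<close> if the latter exists,
  and otherwise the identification only renames vertices; since no head is identified with a
  tail, a renaming preserves the order of every cut. It remains to see that removing an arc
  \<open>(y, w)\<close> that has a twin \<open>(x, w)\<close> with source tails does not change the width. Removing
  an arc never increases the width: delete its leaf, and if the neighbour becomes a leaf let
  it inherit the arc of another leaf. Conversely, subdividing the edge at the leaf of the twin
  and hanging a new leaf for the removed arc there does not increase the width, because
  putting the two twins on the same side of a cut never increases its order.\<close>

section \<open>Trees\<close>

lemma converse_tadj [simp]: "(tadj G)\<inverse> = tadj G"
  by (auto simp: tadj_def insert_commute)

lemma tadj_rtrancl_sym: "(u, v) \<in> (tadj G)\<^sup>* \<Longrightarrow> (v, u) \<in> (tadj G)\<^sup>*"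
  by (metis rtrancl_converseI converse_tadj)

lemma tadj_mono: "G \<subseteq> G' \<Longrightarrow> tadj G \<subseteq> tadj G'"
  by (auto simp: tadj_def)

lemma tadj_rtrancl_mono: "G \<subseteq> G' \<Longrightarrow> (u, v) \<in> (tadj G)\<^sup>* \<Longrightarrow> (u, v) \<in> (tadj G')\<^sup>*"
  using rtrancl_mono tadj_mono by blast

lemma tadj_rtrancl_closed:
  assumes "(c, v) \<in> (tadj G)\<^sup>*" "c \<in> S" "\<And>u w. {u, w} \<in> G \<Longrightarrow> u \<in> S \<Longrightarrow> w \<in> S"
  shows "v \<in> S"
  using assms(1) by (induction rule: rtrancl_induct) (auto simp: tadj_def intro: assms(2,3))

lemma tadj_rtrancl_isolated:
  assumes "\<forall>e\<in>G. l \<notin> e" "(l, v) \<in> (tadj G)\<^sup>* \<or> (v, l) \<in> (tadj G)\<^sup>*"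
  shows "v = l"
proof -
  have "(l, v) \<in> (tadj G)\<^sup>*" using assms(2) tadj_rtrancl_sym by blast
  then show ?thesis using tadj_rtrancl_closed[of l v G "{l}"] assms(1) by auto
qed

lemma tadj_rtrancl_pendant:
  assumes "\<forall>e\<in>G. l \<in> e \<longrightarrow> e = {p, l}" "p \<noteq> l" "c \<noteq> l" "(c, v) \<in> (tadj G)\<^sup>*"
  shows "(c, v) \<in> (tadj (G - {{p, l}}))\<^sup>* \<or> (v = l \<and> (c, p) \<in> (tadj (G - {{p, l}}))\<^sup>*)"
  using assms(4)
proof (induction rule: rtrancl_induct)
  case base
  then show ?case by simp
next
  case (step v u)
  let ?G = "G - {{p, l}}"
  have iso: "\<forall>e\<in>?G. l \<notin> e" using assms(1) by auto
  from step have vu: "{v, u} \<in> G" by (simp add: tadj_def)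
  show ?case
  proof (cases "{v, u} = {p, l}")
    case True
    then have "(v = p \<and> u = l) \<or> (v = l \<and> u = p)" using assms(2) by (auto simp: doubleton_eq_iff)
    then show ?thesis
    proof
      assume "v = p \<and> u = l"
      then show ?thesis using step.IH assms(2) by auto
    next
      assume vu: "v = l \<and> u = p"
      then have "(c, p) \<in> (tadj ?G)\<^sup>*"
        using step.IH tadj_rtrancl_isolated[OF iso, of c] assms(3) by auto
      then show ?thesis using vu by simp
    qed
  next
    case False
    have "l \<in> {v, u} \<longrightarrow> {v, u} = {p, l}" using assms(1) vu by (rule bspec)
    then have "l \<notin> {v, u}" using False by blast
    moreover have "(v, u) \<in> tadj ?G" using vu False by (simp add: tadj_def)
    ultimately show ?thesis using step.IH rtrancl_into_rtrancl by (metis insertCI)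
  qed
qed

lemma is_tree_finite_edges: "is_tree N TE \<Longrightarrow> finite TE"
  unfolding is_tree_def by (meson PowI finite_Pow_iff rev_finite_subset subsetI)

lemma is_tree_finite_nodes: "is_tree N TE \<Longrightarrow> finite N"
  unfolding is_tree_def by simp

lemma is_tree_connected: "is_tree N TE \<Longrightarrow> a \<in> N \<Longrightarrow> b \<in> N \<Longrightarrow> (a, b) \<in> (tadj TE)\<^sup>*"
  unfolding is_tree_def by blast

lemma is_tree_edge:
  assumes "is_tree N TE" "{u, v} \<in> TE" shows "u \<noteq> v" "u \<in> N" "v \<in> N"
proof -
  have "card {u, v} = 2" "{u, v} \<subseteq> N" using assms unfolding is_tree_def by auto
  then show "u \<noteq> v" "u \<in> N" "v \<in> N" by (cases "u = v"; simp)+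
qed

lemma is_tree_edge_nodes: "is_tree N TE \<Longrightarrow> f \<in> TE \<Longrightarrow> x \<in> f \<Longrightarrow> x \<in> N"
  unfolding is_tree_def by blast

lemma is_tree_some_in_edge:
  assumes "is_tree N TE" "f \<in> TE" shows "(SOME a. a \<in> f) \<in> f"
proof -
  have "card f = 2" using assms unfolding is_tree_def by simp
  then obtain x where "x \<in> f" by (metis card.empty ex_in_conv zero_neq_numeral)
  then show ?thesis by (rule someI)
qed

lemma tdeg_le1_unique_edge:
  assumes "finite G" "tdeg G l \<le> 1" "{p, l} \<in> G"
  shows "\<forall>e\<in>G. l \<in> e \<longrightarrow> e = {p, l}"
proof -
  have f: "finite {e\<in>G. l \<in> e}" using assms(1) by simp
  have "card {e\<in>G. l \<in> e} \<le> Suc 0" using assms(2) by (simp add: tdeg_def)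
  then have *: "\<forall>e1\<in>{e\<in>G. l \<in> e}. \<forall>e2\<in>{e\<in>G. l \<in> e}. e1 = e2"
    using card_le_Suc0_iff_eq[OF f] by blast
  show ?thesis
  proof (intro ballI impI)
    fix e assume "e \<in> G" "l \<in> e"
    then show "e = {p, l}" using *[rule_format, of e "{p, l}"] assms(3) by simp
  qed
qed

lemma tdeg_pos:
  assumes "finite TE" "{p, l} \<in> TE" shows "tdeg TE p \<ge> 1"
proof -
  have "finite {e\<in>TE. p \<in> e}" "{p, l} \<in> {e\<in>TE. p \<in> e}" using assms by simp_all
  then have "card {e\<in>TE. p \<in> e} > 0" using card_gt_0_iff by blast
  then show ?thesis unfolding tdeg_def by simp
qed

lemma pendant_edges:
  assumes "{p, l} \<in> TE" "\<forall>e\<in>TE. l \<in> e \<longrightarrow> e = {p, l}"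
  shows "{e\<in>TE. l \<in> e} = {{p, l}}"
  using assms by blast

lemma pendant_leaf:
  assumes "is_tree N TE" "{p, l} \<in> TE" "\<forall>e\<in>TE. l \<in> e \<longrightarrow> e = {p, l}"
  shows "tdeg TE l = 1" "l \<in> tleaves N TE"
  using pendant_edges[OF assms(2,3)] is_tree_edge[OF assms(1,2)]
  by (simp_all add: tdeg_def tleaves_def)

lemma leaf_pendant_edge:
  assumes T: "is_tree N TE" and l: "l \<in> tleaves N TE" and v: "v \<in> N" "v \<noteq> l"
  obtains p where "{p, l} \<in> TE" "\<forall>e\<in>TE. l \<in> e \<longrightarrow> e = {p, l}"
proof -
  have lN: "l \<in> N" using l unfolding tleaves_def by simp
  have "(l, v) \<in> (tadj TE)\<^sup>*" using is_tree_connected[OF T lN v(1)] .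
  then obtain w where "(l, w) \<in> tadj TE" using v(2) by (cases rule: converse_rtranclE) auto
  then have e: "{w, l} \<in> TE" unfolding tadj_def by (simp add: insert_commute)
  have "tdeg TE l \<le> 1" using l unfolding tleaves_def by simp
  then show ?thesis using that tdeg_le1_unique_edge[OF is_tree_finite_edges[OF T] _ e] e by blast
qed

lemma pendant_side_leaves:
  assumes T: "is_tree N TE" and e: "{p, l} \<in> TE" and u: "\<forall>e\<in>TE. l \<in> e \<longrightarrow> e = {p, l}"
  shows "side_leaves N TE {p, l} l = {l}" "side_leaves N TE {p, l} p = tleaves N TE - {l}"
proof -
  have pl: "p \<noteq> l" "p \<in> N" using is_tree_edge[OF T e] by auto
  have iso: "\<forall>e\<in>TE - {{p, l}}. l \<notin> e" using u by auto
  have lf: "l \<in> tleaves N TE" using pendant_leaf[OF T e u] by simp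
  show "side_leaves N TE {p, l} l = {l}"
    using tadj_rtrancl_isolated[OF iso] lf unfolding side_leaves_def by auto
  have "(p, v) \<in> (tadj (TE - {{p, l}}))\<^sup>*" if "v \<in> tleaves N TE - {l}" for v
  proof -
    have "(p, v) \<in> (tadj TE)\<^sup>*"
      using that is_tree_connected[OF T pl(2)] unfolding tleaves_def by blast
    then show ?thesis using tadj_rtrancl_pendant[OF u pl(1) pl(1)] that by blast
  qed
  then show "side_leaves N TE {p, l} p = tleaves N TE - {l}"
    using tadj_rtrancl_isolated[OF iso, of p] pl unfolding side_leaves_def by auto
qed

section \<open>Directed branch-width of an arc set\<close>

definition cut_vertices :: "('a \<times> 'a) set \<Rightarrow> ('a \<times> 'a) set \<Rightarrow> 'a set" where
  "cut_vertices E X = {y. \<exists>x z. (x, y) \<in> E - X \<and> (y, z) \<in> X}"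

definition cut_order :: "('a \<times> 'a) set \<Rightarrow> ('a \<times> 'a) set \<Rightarrow> nat" where
  "cut_order E X = card (cut_vertices E X \<union> cut_vertices E (E - X))"

definition dec_edge_order :: "('a \<times> 'a) set \<Rightarrow> nat set \<Rightarrow> nat set set \<Rightarrow> (nat \<Rightarrow> 'a \<times> 'a) \<Rightarrow> nat set \<Rightarrow> nat" where
  "dec_edge_order E N TE \<beta> e = cut_order E (\<beta> ` side_leaves N TE e (SOME a. a \<in> e))"

definition dec_width :: "('a \<times> 'a) set \<Rightarrow> nat set \<Rightarrow> nat set set \<Rightarrow> (nat \<Rightarrow> 'a \<times> 'a) \<Rightarrow> nat" where
  "dec_width E N TE \<beta> = Max (insert 0 (dec_edge_order E N TE \<beta> ` TE))"

definition is_arc_dbd :: "('a \<times> 'a) set \<Rightarrow> nat set \<Rightarrow> nat set set \<Rightarrow> (nat \<Rightarrow> 'a \<times> 'a) \<Rightarrow> bool" where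
  "is_arc_dbd E N TE \<beta> \<longleftrightarrow> is_tree N TE \<and> (\<forall>v\<in>N. tdeg TE v \<le> 3) \<and> bij_betw \<beta> (tleaves N TE) E"

definition arc_dbw :: "('a \<times> 'a) set \<Rightarrow> nat" where
  "arc_dbw E = (if E = {} then 0
     else (LEAST k. \<exists>N TE \<beta>. is_arc_dbd E N TE \<beta> \<and> dec_width E N TE \<beta> = k))"

lemma dbw_eq_arc_dbw: "dbw D = arc_dbw (snd D)"
  unfolding dbw_def arc_dbw_def is_dbd_def is_arc_dbd_def dbd_width_def dec_width_def
    tedge_order_def dec_edge_order_def fD_def cut_order_def SV_def cut_vertices_def by simp

lemma cut_verticesI: "(x, y) \<in> E - X \<Longrightarrow> (y, z) \<in> X \<Longrightarrow> y \<in> cut_vertices E X"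
  unfolding cut_vertices_def by blast

lemma cut_verticesE:
  "y \<in> cut_vertices E X \<Longrightarrow> (\<And>x z. (x, y) \<in> E - X \<Longrightarrow> (y, z) \<in> X \<Longrightarrow> P) \<Longrightarrow> P"
  unfolding cut_vertices_def by blast

lemma cut_vertices_subset_Range: "cut_vertices E X \<subseteq> Range E"
  by (auto elim!: cut_verticesE)

lemma finite_cut_vertices: "finite E \<Longrightarrow> finite (cut_vertices E X)"
  using cut_vertices_subset_Range finite_Range by (meson rev_finite_subset)

lemma cut_order_mono:
  assumes "finite E'"
    and "cut_vertices E X \<subseteq> cut_vertices E' X'" "cut_vertices E (E - X) \<subseteq> cut_vertices E' (E' - X')"
  shows "cut_order E X \<le> cut_order E' X'"
  unfolding cut_order_def using assms finite_cut_vertices by (intro card_mono) blast+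

lemma cut_order_Diff: "X \<subseteq> E \<Longrightarrow> cut_order E (E - X) = cut_order E X"
  by (simp add: cut_order_def double_diff Un_commute)

lemma cut_order_delete_arc:
  assumes "finite E" "X \<subseteq> E" shows "cut_order (E - {a}) (X - {a}) \<le> cut_order E X"
  using assms by (intro cut_order_mono) (auto elim!: cut_verticesE intro: cut_verticesI)

lemma dec_width_le:
  "finite TE \<Longrightarrow> (\<And>e. e \<in> TE \<Longrightarrow> dec_edge_order E N TE \<beta> e \<le> k) \<Longrightarrow> dec_width E N TE \<beta> \<le> k"
  unfolding dec_width_def by (auto intro!: Max.boundedI)

lemma dec_edge_order_le_width:
  "finite TE \<Longrightarrow> e \<in> TE \<Longrightarrow> dec_edge_order E N TE \<beta> e \<le> dec_width E N TE \<beta>"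
  unfolding dec_width_def by (auto intro!: Max_ge)

lemma side_leaves_subset: "side_leaves N TE e c \<subseteq> tleaves N TE"
  unfolding side_leaves_def by blast

lemma pendant_dec_edge_order:
  assumes D: "is_arc_dbd E N TE \<beta>" and e: "{p, l} \<in> TE" and u: "\<forall>e\<in>TE. l \<in> e \<longrightarrow> e = {p, l}"
  shows "dec_edge_order E N TE \<beta> {p, l} = cut_order E {\<beta> l}"
proof -
  have T: "is_tree N TE" and bij: "bij_betw \<beta> (tleaves N TE) E"
    using D unfolding is_arc_dbd_def by auto
  have lf: "l \<in> tleaves N TE" using pendant_leaf[OF T e u] by simp
  have bl: "{\<beta> l} \<subseteq> E" using bij_betw_apply[OF bij lf] by simp
  have "\<beta> ` (tleaves N TE - {l}) = \<beta> ` tleaves N TE - \<beta> ` {l}"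
    using bij lf by (intro inj_on_image_set_diff) (auto simp: bij_betw_def)
  then have "\<beta> ` (tleaves N TE - {l}) = E - {\<beta> l}" using bij by (simp add: bij_betw_def)
  moreover have "(SOME a. a \<in> {p, l}) \<in> {p, l}" by (rule someI[of _ p]) simp
  ultimately show ?thesis
    unfolding dec_edge_order_def using cut_order_Diff[OF bl] pendant_side_leaves[OF T e u] by auto
qed

lemma Least_eq_if_dominated:
  fixes P Q :: "nat \<Rightarrow> bool"
  assumes "\<And>k. P k \<Longrightarrow> \<exists>k'\<le>k. Q k'" "\<And>k. Q k \<Longrightarrow> \<exists>k'\<le>k. P k'"
  shows "Least P = Least Q"
proof (cases "\<exists>k. P k")
  case True
  then obtain k' where k': "k' \<le> Least P" "Q k'" using assms(1) LeastI_ex by blast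
  then have "Least Q \<le> Least P" by (meson Least_le order_trans)
  moreover obtain k'' where "k'' \<le> Least Q" "P k''" using assms(2) LeastI[of Q, OF k'(2)] by blast
  then have "Least P \<le> Least Q" by (meson Least_le order_trans)
  ultimately show ?thesis by simp
next
  case False
  then have "P = Q" using assms(2) by (auto intro!: ext)
  then show ?thesis by simp
qed

lemma arc_dbw_eqI:
  assumes "E1 = {} \<longleftrightarrow> E2 = {}"
   "\<And>N TE \<beta>. is_arc_dbd E1 N TE \<beta> \<Longrightarrow>
      \<exists>N' TE' \<beta>'. is_arc_dbd E2 N' TE' \<beta>' \<and> dec_width E2 N' TE' \<beta>' \<le> dec_width E1 N TE \<beta>"
   "\<And>N TE \<beta>. is_arc_dbd E2 N TE \<beta> \<Longrightarrow>
      \<exists>N' TE' \<beta>'. is_arc_dbd E1 N' TE' \<beta>' \<and> dec_width E1 N' TE' \<beta>' \<le> dec_width E2 N TE \<beta>"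
  shows "arc_dbw E1 = arc_dbw E2"
proof -
  have "(LEAST k. \<exists>N TE \<beta>. is_arc_dbd E1 N TE \<beta> \<and> dec_width E1 N TE \<beta> = k)
      = (LEAST k. \<exists>N TE \<beta>. is_arc_dbd E2 N TE \<beta> \<and> dec_width E2 N TE \<beta> = k)"
    by (rule Least_eq_if_dominated) (use assms(2,3) in blast)+
  then show ?thesis using assms(1) by (simp add: arc_dbw_def)
qed

lemma arc_dbw_image:
  assumes inj: "inj_on \<psi> F"
    and cut: "\<And>X. X \<subseteq> F \<Longrightarrow> cut_order (\<psi> ` F) (\<psi> ` X) = cut_order F X"
  shows "arc_dbw (\<psi> ` F) = arc_dbw F"
proof (rule arc_dbw_eqI)
  have bij: "bij_betw \<psi> F (\<psi> ` F)" using inj by (simp add: inj_on_imp_bij_betw)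
  show "\<psi> ` F = {} \<longleftrightarrow> F = {}" by simp
  fix N TE \<beta>
  {
    assume d: "is_arc_dbd (\<psi> ` F) N TE \<beta>"
    let ?\<beta> = "inv_into F \<psi> \<circ> \<beta>"
    have b0: "bij_betw \<beta> (tleaves N TE) (\<psi> ` F)" using d by (simp add: is_arc_dbd_def)
    have d': "is_arc_dbd F N TE ?\<beta>"
      using d bij_betw_trans[OF b0 bij_betw_inv_into[OF bij]] by (simp add: is_arc_dbd_def)
    have "dec_edge_order F N TE ?\<beta> e = dec_edge_order (\<psi> ` F) N TE \<beta> e" for e
    proof -
      let ?S = "side_leaves N TE e (SOME a. a \<in> e)"
      have bs: "\<beta> ` ?S \<subseteq> \<psi> ` F" using b0 side_leaves_subset by (metis bij_betw_def image_mono)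
      then have "?\<beta> ` ?S \<subseteq> F" by (simp add: image_comp[symmetric] image_subset_iff inv_into_into)
      moreover have "\<psi> ` ?\<beta> ` ?S = \<beta> ` ?S"
        using bs by (force simp: image_comp intro: f_inv_into_f)
      ultimately show ?thesis unfolding dec_edge_order_def using cut by metis
    qed
    then have "dec_width F N TE ?\<beta> = dec_width (\<psi> ` F) N TE \<beta>" unfolding dec_width_def by simp
    then show "\<exists>N' TE' \<beta>'. is_arc_dbd F N' TE' \<beta>' \<and> dec_width F N' TE' \<beta>' \<le> dec_width (\<psi> ` F) N TE \<beta>"
      using d' by (intro exI[of _ N] exI[of _ TE] exI[of _ ?\<beta>]) simp
  }
  {
    assume d: "is_arc_dbd F N TE \<beta>"
    let ?\<beta> = "\<psi> \<circ> \<beta>"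
    have b0: "bij_betw \<beta> (tleaves N TE) F" using d by (simp add: is_arc_dbd_def)
    have d': "is_arc_dbd (\<psi> ` F) N TE ?\<beta>"
      using d bij_betw_trans[OF b0 bij] by (simp add: is_arc_dbd_def)
    have "dec_edge_order (\<psi> ` F) N TE ?\<beta> e = dec_edge_order F N TE \<beta> e" for e
    proof -
      let ?S = "side_leaves N TE e (SOME a. a \<in> e)"
      have "\<beta> ` ?S \<subseteq> F" using b0 side_leaves_subset by (metis bij_betw_def image_mono)
      then show ?thesis unfolding dec_edge_order_def image_comp[symmetric] by (rule cut)
    qed
    then have "dec_width (\<psi> ` F) N TE ?\<beta> = dec_width F N TE \<beta>" unfolding dec_width_def by simp
    then show "\<exists>N' TE' \<beta>'. is_arc_dbd (\<psi> ` F) N' TE' \<beta>' \<and> dec_width (\<psi> ` F) N' TE' \<beta>' \<le> dec_width F N TE \<beta>"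
      using d' by (intro exI[of _ N] exI[of _ TE] exI[of _ ?\<beta>]) simp
  }
qed

lemma cut_vertices_rename:
  assumes inj: "inj_on (map_prod \<phi> \<phi>) F"
    and sep: "\<And>v w. v \<in> Range F \<Longrightarrow> w \<in> Domain F \<Longrightarrow> \<phi> v = \<phi> w \<Longrightarrow> v = w"
    and Y: "Y \<subseteq> F"
  shows "cut_vertices (map_prod \<phi> \<phi> ` F) (map_prod \<phi> \<phi> ` Y) = \<phi> ` cut_vertices F Y"
proof -
  let ?\<psi> = "map_prod \<phi> \<phi>"
  have d: "?\<psi> ` F - ?\<psi> ` Y = ?\<psi> ` (F - Y)" using inj Y by (simp add: inj_on_image_set_diff)
  show ?thesis
  proof
    show "cut_vertices (?\<psi> ` F) (?\<psi> ` Y) \<subseteq> \<phi> ` cut_vertices F Y"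
    proof
      fix y assume "y \<in> cut_vertices (?\<psi> ` F) (?\<psi> ` Y)"
      then have "\<exists>x z. (x, y) \<in> ?\<psi> ` (F - Y) \<and> (y, z) \<in> ?\<psi> ` Y"
        by (simp add: cut_vertices_def d)
      then obtain x0 v0 v1 z1 where h: "(x0, v0) \<in> F - Y" "\<phi> v0 = y" "(v1, z1) \<in> Y" "\<phi> v1 = y"
        by auto
      moreover have "v0 \<in> Range F" "v1 \<in> Domain F" using h(1,3) Y by blast+
      ultimately have "v0 = v1" using sep by simp
      then show "y \<in> \<phi> ` cut_vertices F Y" using h by (auto intro: cut_verticesI)
    qed
    show "\<phi> ` cut_vertices F Y \<subseteq> cut_vertices (?\<psi> ` F) (?\<psi> ` Y)"
    proof
      fix y assume "y \<in> \<phi> ` cut_vertices F Y"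
      then obtain x v z where "(x, v) \<in> F - Y" "(v, z) \<in> Y" "y = \<phi> v"
        by (auto elim!: cut_verticesE)
      then have "(\<phi> x, y) \<in> ?\<psi> ` (F - Y)" "(y, \<phi> z) \<in> ?\<psi> ` Y" by force+
      then show "y \<in> cut_vertices (?\<psi> ` F) (?\<psi> ` Y)" unfolding d[symmetric] by (rule cut_verticesI)
    qed
  qed
qed

lemma arc_dbw_rename:
  assumes inj: "inj_on (map_prod \<phi> \<phi>) F"
    and sep: "\<And>v w. v \<in> Range F \<Longrightarrow> w \<in> Domain F \<Longrightarrow> \<phi> v = \<phi> w \<Longrightarrow> v = w"
  shows "arc_dbw (map_prod \<phi> \<phi> ` F) = arc_dbw F"
proof (rule arc_dbw_image[OF inj])
  fix X assume X: "X \<subseteq> F"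
  let ?\<psi> = "map_prod \<phi> \<phi>"
  have "cut_vertices F X \<union> cut_vertices F (F - X) \<subseteq> Range F \<inter> Domain F"
    using X by (auto elim!: cut_verticesE)
  then have ij: "inj_on \<phi> (cut_vertices F X \<union> cut_vertices F (F - X))"
    using sep by (meson Int_iff inj_onI subsetD)
  have d: "?\<psi> ` F - ?\<psi> ` X = ?\<psi> ` (F - X)" using inj X by (simp add: inj_on_image_set_diff)
  have e1: "cut_vertices (?\<psi> ` F) (?\<psi> ` X) = \<phi> ` cut_vertices F X"
    by (rule cut_vertices_rename[OF inj sep X])
  have e2: "cut_vertices (?\<psi> ` F) (?\<psi> ` (F - X)) = \<phi> ` cut_vertices F (F - X)"
    by (rule cut_vertices_rename[OF inj sep Diff_subset])
  have "cut_order (?\<psi> ` F) (?\<psi> ` X) = card (\<phi> ` cut_vertices F X \<union> \<phi> ` cut_vertices F (F - X))"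
    unfolding cut_order_def d e1 e2 ..
  also have "\<dots> = cut_order F X"
    unfolding cut_order_def using card_image[OF ij] by (simp add: image_Un)
  finally show "cut_order (?\<psi> ` F) (?\<psi> ` X) = cut_order F X" .
qed

lemma cut_vertices_converse: "X \<subseteq> E \<Longrightarrow> cut_vertices (E\<inverse>) (X\<inverse>) = cut_vertices E (E - X)"
  unfolding cut_vertices_def by blast

lemma arc_dbw_converse: "arc_dbw (E\<inverse>) = arc_dbw E"
proof -
  note cv = cut_vertices_converse
  have "arc_dbw (prod.swap ` E) = arc_dbw E"
  proof (rule arc_dbw_image)
    show "inj_on prod.swap E" by (metis inj_on_def swap_swap)
    fix X assume X: "X \<subseteq> E"
    have swap: "prod.swap ` A = A\<inverse>" for A :: "('a \<times> 'a) set" by auto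
    have "E\<inverse> - X\<inverse> = (E - X)\<inverse>" by blast
    then have "cut_order (E\<inverse>) (X\<inverse>) = card (cut_vertices E (E - X) \<union> cut_vertices E (E - (E - X)))"
      unfolding cut_order_def using cv[OF X] cv[of "E - X"] by simp
    then show "cut_order (prod.swap ` E) (prod.swap ` X) = cut_order E X"
      unfolding swap cut_order_def using X by (simp add: double_diff Un_commute)
  qed
  moreover have "prod.swap ` E = E\<inverse>" by auto
  ultimately show ?thesis by simp
qed

section \<open>Twin arcs\<close>

definition twin_arcs :: "('a \<times> 'a) set \<Rightarrow> 'a \<times> 'a \<Rightarrow> 'a \<times> 'a \<Rightarrow> bool" where
  "twin_arcs E a b \<longleftrightarrow> a \<noteq> b \<and>
     ((snd a = snd b \<and> fst a \<notin> Range E \<and> fst b \<notin> Range E) \<or>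
      (fst a = fst b \<and> snd a \<notin> Domain E \<and> snd b \<notin> Domain E))"

lemma twin_arcs_subset: "twin_arcs E a b \<Longrightarrow> E' \<subseteq> E \<Longrightarrow> twin_arcs E' a b"
  unfolding twin_arcs_def by blast

lemma twin_arcs_converse:
  "twin_arcs (E\<inverse>) (prod.swap a) (prod.swap b) \<longleftrightarrow> twin_arcs E a b"
  unfolding twin_arcs_def by (cases a; cases b) auto

lemma twin_arcs_cut_vertices:
  assumes tw: "twin_arcs E a b" and ab: "a \<in> E" "b \<in> E" and Y: "Y \<subseteq> E - {a}"
  shows "cut_vertices E (if b \<in> Y then insert a Y else Y) \<subseteq> cut_vertices (E - {a}) Y"
proof
  fix y
  let ?Y = "if b \<in> Y then insert a Y else Y"
  assume "y \<in> cut_vertices E ?Y"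
  then obtain x z where xy: "(x, y) \<in> E - ?Y" and yz: "(y, z) \<in> ?Y" by (rule cut_verticesE)
  obtain a1 a2 where a: "a = (a1, a2)" by (cases a)
  obtain b1 b2 where b: "b = (b1, b2)" by (cases b)
  have tw': "(a2 = b2 \<and> a1 \<notin> Range E) \<or> (a1 = b1 \<and> a2 \<notin> Domain E)"
    using tw a b by (auto simp: twin_arcs_def)
  have YE: "?Y \<subseteq> E" using Y ab by auto
  have "\<exists>x'. (x', y) \<in> (E - {a}) - Y"
  proof (cases "(x, y) = a")
    case True
    then have "b \<notin> Y" using xy by auto
    moreover have "y \<in> Domain E" using yz YE by blast
    ultimately show ?thesis using tw' True a b ab tw by (auto simp: twin_arcs_def)
  next
    case False
    then show ?thesis using xy by (auto split: if_splits)
  qed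
  moreover have "\<exists>z'. (y, z') \<in> Y"
  proof (cases "(y, z) = a")
    case True
    then have "b \<in> Y" using yz Y by (auto split: if_splits)
    moreover have "y \<in> Range E" using xy by blast
    ultimately show ?thesis using tw' True a b by auto
  next
    case False
    then show ?thesis using yz by (auto split: if_splits)
  qed
  ultimately show "y \<in> cut_vertices (E - {a}) Y" by (blast intro: cut_verticesI)
qed

lemma twin_arcs_cut_order:
  assumes "finite E" "twin_arcs E a b" "a \<in> E" "b \<in> E" "X \<subseteq> E - {a}"
  shows "cut_order E (if b \<in> X then insert a X else X) \<le> cut_order (E - {a}) X"
proof -
  let ?X = "if b \<in> X then insert a X else X"
  let ?Z = "E - {a} - X"
  have bE: "b \<in> E - {a}" using assms(2,4) by (auto simp: twin_arcs_def)
  have c: "E - ?X = (if b \<in> ?Z then insert a ?Z else ?Z)" using assms(3,5) bE by auto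
  show ?thesis
  proof (rule cut_order_mono)
    show "cut_vertices E ?X \<subseteq> cut_vertices (E - {a}) X"
      by (rule twin_arcs_cut_vertices[OF assms(2-5)])
    show "cut_vertices E (E - ?X) \<subseteq> cut_vertices (E - {a}) (E - {a} - X)"
      unfolding c by (rule twin_arcs_cut_vertices[OF assms(2-4)]) auto
  qed (use assms(1) in simp)
qed

lemma twin_arcs_single_cut_vertices:
  assumes tw: "twin_arcs E a b" and ab: "a \<in> E" "b \<in> E" and c: "c \<in> {a, b}"
  shows "cut_vertices E {c} \<subseteq> cut_vertices (E - {a}) {b}"
proof
  fix y assume "y \<in> cut_vertices E {c}"
  then obtain x z where "(x, y) \<in> E - {c}" "(y, z) \<in> {c}" by (rule cut_verticesE)
  then have x: "(x, y) \<in> E - {c}" "y = fst c" by auto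
  obtain a1 a2 where a: "a = (a1, a2)" by (cases a)
  obtain b1 b2 where b: "b = (b1, b2)" by (cases b)
  have "fst c \<in> Range E" using x by force
  then have h: "a1 = b1" "y = b1" "a2 \<notin> Domain E" "b2 \<notin> Domain E"
    using tw c x(2) a b by (auto simp: twin_arcs_def)
  text \<open>A twin is never a loop, so the arc entering the common tail is neither twin.\<close>
  have "(x, y) \<noteq> a" "(x, y) \<noteq> b" using h a b ab by force+
  then have "(x, b1) \<in> (E - {a}) - {b}" using x h by auto
  then show "y \<in> cut_vertices (E - {a}) {b}" using h b by (auto intro: cut_verticesI)
qed

lemma twin_arcs_single_cut_order:
  assumes "finite E" "twin_arcs E a b" "a \<in> E" "b \<in> E" "c \<in> {a, b}"
  shows "cut_order E {c} \<le> cut_order (E - {a}) {b}"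
proof (rule cut_order_mono)
  show "cut_vertices E {c} \<subseteq> cut_vertices (E - {a}) {b}"
    by (rule twin_arcs_single_cut_vertices[OF assms(2-5)])
  let ?s = prod.swap
  have swap: "{?s d} = {d}\<inverse>" for d :: "'a \<times> 'a" by (cases d) auto
  have diff: "E\<inverse> - {a}\<inverse> = (E - {a})\<inverse>" by blast
  have cE: "{c} \<subseteq> E" and bE: "{b} \<subseteq> E - {a}" using assms(2-5) by (auto simp: twin_arcs_def)
  have tw: "twin_arcs (E\<inverse>) (?s a) (?s b)" using assms(2) by (simp add: twin_arcs_converse)
  have "cut_vertices E (E - {c}) = cut_vertices (E\<inverse>) {?s c}"
    unfolding swap by (rule cut_vertices_converse[OF cE, symmetric])
  also have "\<dots> \<subseteq> cut_vertices (E\<inverse> - {?s a}) {?s b}"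
    by (rule twin_arcs_single_cut_vertices[OF tw]) (use assms(3-5) in \<open>auto simp: prod.swap_def\<close>)
  also have "\<dots> = cut_vertices (E - {a}) (E - {a} - {b})"
    unfolding swap diff by (rule cut_vertices_converse[OF bE])
  finally show "cut_vertices E (E - {c}) \<subseteq> cut_vertices (E - {a}) (E - {a} - {b})" .
qed (use assms(1) in simp)

section \<open>Deleting an arc does not increase the width\<close>

lemma bij_betw_Diff_singleton: "bij_betw f A B \<Longrightarrow> x \<in> A \<Longrightarrow> bij_betw f (A - {x}) (B - {f x})"
  by (rule bij_betw_DiffI) (auto simp: bij_betw_def)

lemma bij_betw_fun_upd_insert:
  assumes "bij_betw f A B" "x \<notin> A" "y \<notin> B"
  shows "bij_betw (f(x := y)) (insert x A) (insert y B)"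
proof -
  have "bij_betw (f(x := y)) A B"
    using assms(1) by (rule bij_betw_cong[THEN iffD1, rotated]) (use assms(2) in auto)
  then show ?thesis using assms(2,3) by (simp add: bij_betw_def inj_on_insert)
qed

lemma dec_width_le_if_edge_orders_le:
  assumes "finite TE" "TE' \<subseteq> TE"
    and "\<And>f. f \<in> TE' \<Longrightarrow> dec_edge_order E' N' TE' \<beta>' f \<le> dec_edge_order E N TE \<beta> f"
  shows "dec_width E' N' TE' \<beta>' \<le> dec_width E N TE \<beta>"
  using assms dec_edge_order_le_width[OF assms(1)] finite_subset
  by (intro dec_width_le) (blast intro: order_trans)+

lemma single_arc_dbd: "is_arc_dbd {x} {0} {} (\<lambda>_. x)" "dec_width E N {} \<beta> = 0"
proof -
  have "tleaves {0} {} = {0}" unfolding tleaves_def tdeg_def by simp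
  then show "is_arc_dbd {x} {0} {} (\<lambda>_. x)"
    unfolding is_arc_dbd_def is_tree_def by (simp add: tdeg_def bij_betw_def)
  show "dec_width E N {} \<beta> = 0" unfolding dec_width_def by simp
qed

locale tree_pendant =
  fixes N :: "nat set" and TE :: "nat set set" and p l :: nat
  assumes tree: "is_tree N TE"
    and pendant_edge: "{p, l} \<in> TE"
    and pendant: "\<forall>e\<in>TE. l \<in> e \<longrightarrow> e = {p, l}"
begin

lemma p_neq_l: "p \<noteq> l" and p_in_N: "p \<in> N" and l_in_N: "l \<in> N"
  using is_tree_edge[OF tree pendant_edge] by auto

lemma l_leaf: "l \<in> tleaves N TE"
  using pendant_leaf[OF tree pendant_edge pendant] by simp

lemma l_isolated: "\<forall>e\<in>TE - {{p, l}}. l \<notin> e"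
  using pendant by blast

lemma finite_TE: "finite TE"
  using is_tree_finite_edges[OF tree] .

lemma tree_delete: "is_tree (N - {l}) (TE - {{p, l}})"
  unfolding is_tree_def
proof (intro conjI ballI)
  show "finite (N - {l})" using tree unfolding is_tree_def by simp
  show "N - {l} \<noteq> {}" using p_in_N p_neq_l by blast
next
  fix f assume f: "f \<in> TE - {{p, l}}"
  then show "card f = 2" using tree unfolding is_tree_def by simp
  show "f \<subseteq> N - {l}" using f tree l_isolated unfolding is_tree_def by blast
next
  fix x y assume "x \<in> N - {l}" "y \<in> N - {l}"
  then show "(x, y) \<in> (tadj (TE - {{p, l}}))\<^sup>*"
    using tadj_rtrancl_pendant[OF pendant p_neq_l, of x y] is_tree_connected[OF tree] by blast
next
  have "card (TE - {{p, l}}) = card TE - 1" using finite_TE pendant_edge by simp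
  moreover have "card (N - {l}) = card N - 1" using l_in_N by simp
  moreover have "card TE = card N - 1" using tree unfolding is_tree_def by simp
  ultimately show "card (TE - {{p, l}}) = card (N - {l}) - 1" by simp
qed

lemma tdeg_delete: "v \<noteq> l \<Longrightarrow> tdeg (TE - {{p, l}}) v = (if v = p then tdeg TE p - 1 else tdeg TE v)"
proof -
  have eq: "{f \<in> TE - {{p, l}}. v \<in> f} = {f \<in> TE. v \<in> f} - {{p, l}}" by blast
  assume "v \<noteq> l"
  then show ?thesis unfolding tdeg_def eq using finite_TE pendant_edge by auto
qed

lemma tleaves_delete:
  assumes "tdeg TE p \<ge> 2"
  shows "tleaves (N - {l}) (TE - {{p, l}}) = tleaves N TE - {l} \<union> (if tdeg TE p = 2 then {p} else {})"
proof (rule set_eqI)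
  fix v
  consider "v = p" | "v = l" | "v \<noteq> p" "v \<noteq> l" by blast
  then show "v \<in> tleaves (N - {l}) (TE - {{p, l}}) \<longleftrightarrow>
      v \<in> tleaves N TE - {l} \<union> (if tdeg TE p = 2 then {p} else {})"
  proof cases
    case 1
    then show ?thesis using assms tdeg_delete[of p] p_in_N p_neq_l unfolding tleaves_def by auto
  next
    case 2
    then show ?thesis using p_neq_l unfolding tleaves_def by auto
  next
    case 3
    then show ?thesis using tdeg_delete[of v] unfolding tleaves_def by auto
  qed
qed

lemma tdeg_delete_le3:
  assumes "\<forall>v\<in>N. tdeg TE v \<le> 3" shows "\<forall>v\<in>N - {l}. tdeg (TE - {{p, l}}) v \<le> 3"
proof
  fix v assume "v \<in> N - {l}"
  then show "tdeg (TE - {{p, l}}) v \<le> 3" using tdeg_delete[of v] assms by auto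
qed

lemma tadj_rtrancl_delete:
  assumes f: "f \<in> TE - {{p, l}}" and c: "c \<in> f"
  shows "v \<noteq> l \<Longrightarrow> (c, v) \<in> (tadj (TE - {{p, l}} - {f}))\<^sup>* \<longleftrightarrow> (c, v) \<in> (tadj (TE - {f}))\<^sup>*"
    and "(c, p) \<in> (tadj (TE - {{p, l}} - {f}))\<^sup>* \<longleftrightarrow> (c, l) \<in> (tadj (TE - {f}))\<^sup>*"
proof -
  have sub: "TE - {{p, l}} - {f} \<subseteq> TE - {f}" by blast
  have eq: "TE - {f} - {{p, l}} = TE - {{p, l}} - {f}" by blast
  have uf: "\<forall>e\<in>TE - {f}. l \<in> e \<longrightarrow> e = {p, l}" using pendant by blast
  have cl: "c \<noteq> l" using l_isolated f c by blast
  have pendant_path: "(c, w) \<in> (tadj (TE - {f}))\<^sup>* \<Longrightarrow>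
      (c, w) \<in> (tadj (TE - {{p, l}} - {f}))\<^sup>* \<or> (w = l \<and> (c, p) \<in> (tadj (TE - {{p, l}} - {f}))\<^sup>*)" for w
    using tadj_rtrancl_pendant[OF uf p_neq_l cl] unfolding eq by blast
  show "(c, v) \<in> (tadj (TE - {{p, l}} - {f}))\<^sup>* \<longleftrightarrow> (c, v) \<in> (tadj (TE - {f}))\<^sup>*" if "v \<noteq> l"
    using pendant_path tadj_rtrancl_mono[OF sub] that by blast
  have "(c, l) \<notin> (tadj (TE - {{p, l}} - {f}))\<^sup>*"
    using tadj_rtrancl_isolated[of "TE - {{p, l}} - {f}" l c] l_isolated cl by blast
  moreover have "(p, l) \<in> tadj (TE - {f})" using pendant_edge f unfolding tadj_def by auto
  ultimately show "(c, p) \<in> (tadj (TE - {{p, l}} - {f}))\<^sup>* \<longleftrightarrow> (c, l) \<in> (tadj (TE - {f}))\<^sup>*"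
    using pendant_path tadj_rtrancl_mono[OF sub] rtrancl_into_rtrancl by metis
qed

lemma side_leaves_delete:
  assumes dp: "tdeg TE p \<ge> 2" and f: "f \<in> TE - {{p, l}}" and c: "c \<in> f"
  shows "side_leaves (N - {l}) (TE - {{p, l}}) f c = side_leaves N TE f c - {l}
           \<union> (if tdeg TE p = 2 \<and> l \<in> side_leaves N TE f c then {p} else {})"
proof (rule set_eqI)
  fix v
  have pL: "p \<notin> tleaves N TE" using dp unfolding tleaves_def by simp
  consider "v = p" | "v = l" | "v \<noteq> p" "v \<noteq> l" by blast
  then show "v \<in> side_leaves (N - {l}) (TE - {{p, l}}) f c \<longleftrightarrow> v \<in> side_leaves N TE f c - {l}
           \<union> (if tdeg TE p = 2 \<and> l \<in> side_leaves N TE f c then {p} else {})"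
  proof cases
    case 1
    then show ?thesis using pL l_leaf tadj_rtrancl_delete(2)[OF f c]
      unfolding side_leaves_def tleaves_delete[OF dp] by auto
  next
    case 2
    then show ?thesis using p_neq_l unfolding side_leaves_def tleaves_def by auto
  next
    case 3
    then show ?thesis using tadj_rtrancl_delete(1)[OF f c]
      unfolding side_leaves_def tleaves_delete[OF dp] by auto
  qed
qed

lemma dbd_absorb_pendant:
  assumes D: "is_arc_dbd E N TE \<beta>" and dp: "tdeg TE p = 2"
  shows "is_arc_dbd E (N - {l}) (TE - {{p, l}}) (\<beta>(p := \<beta> l))"
    and "dec_width E (N - {l}) (TE - {{p, l}}) (\<beta>(p := \<beta> l)) \<le> dec_width E N TE \<beta>"
proof -
  let ?L = "tleaves N TE" and ?\<beta> = "\<beta>(p := \<beta> l)"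
  have bij: "bij_betw \<beta> ?L E" and deg: "\<forall>v\<in>N. tdeg TE v \<le> 3"
    using D unfolding is_arc_dbd_def by auto
  have pL: "p \<notin> ?L" using dp unfolding tleaves_def by simp
  have "bij_betw ?\<beta> (insert p (?L - {l})) (insert (\<beta> l) (E - {\<beta> l}))"
    using bij_betw_Diff_singleton[OF bij l_leaf] pL by (intro bij_betw_fun_upd_insert) auto
  moreover have "insert (\<beta> l) (E - {\<beta> l}) = E" using bij l_leaf bij_betwE by fastforce
  ultimately show D': "is_arc_dbd E (N - {l}) (TE - {{p, l}}) ?\<beta>"
    unfolding is_arc_dbd_def tleaves_delete[OF eq_imp_le[OF dp[symmetric]]]
    using tree_delete tdeg_delete_le3[OF deg] dp by simp
  have "dec_edge_order E (N - {l}) (TE - {{p, l}}) ?\<beta> f = dec_edge_order E N TE \<beta> f"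
    if f: "f \<in> TE - {{p, l}}" for f
  proof -
    let ?c = "SOME a. a \<in> f"
    have c: "?c \<in> f" using is_tree_some_in_edge[OF tree_delete f] .
    let ?S = "side_leaves N TE f ?c"
    have S': "side_leaves (N - {l}) (TE - {{p, l}}) f ?c = ?S - {l} \<union> (if l \<in> ?S then {p} else {})"
      using side_leaves_delete[OF _ f c] dp by simp
    have "p \<notin> ?S" using pL side_leaves_subset by blast
    then have "?\<beta> ` (?S - {l} \<union> (if l \<in> ?S then {p} else {})) = \<beta> ` ?S"
      by (auto simp: fun_upd_image)
    then show ?thesis unfolding dec_edge_order_def S' by simp
  qed
  then show "dec_width E (N - {l}) (TE - {{p, l}}) ?\<beta> \<le> dec_width E N TE \<beta>"
    by (intro dec_width_le_if_edge_orders_le[OF finite_TE]) auto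
qed

lemma dbd_delete_pendant:
  assumes D: "is_arc_dbd E N TE \<beta>" and dp: "tdeg TE p = 3"
  shows "is_arc_dbd (E - {\<beta> l}) (N - {l}) (TE - {{p, l}}) \<beta>"
    and "dec_width (E - {\<beta> l}) (N - {l}) (TE - {{p, l}}) \<beta> \<le> dec_width E N TE \<beta>"
proof -
  let ?L = "tleaves N TE"
  have bij: "bij_betw \<beta> ?L E" and deg: "\<forall>v\<in>N. tdeg TE v \<le> 3"
    using D unfolding is_arc_dbd_def by auto
  have finE: "finite E"
    using bij is_tree_finite_nodes[OF tree] bij_betw_finite unfolding tleaves_def by fastforce
  have L': "tleaves (N - {l}) (TE - {{p, l}}) = ?L - {l}" using tleaves_delete dp by simp
  show "is_arc_dbd (E - {\<beta> l}) (N - {l}) (TE - {{p, l}}) \<beta>"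
    unfolding is_arc_dbd_def L' using tree_delete tdeg_delete_le3[OF deg]
      bij_betw_Diff_singleton[OF bij l_leaf] by simp
  have "dec_edge_order (E - {\<beta> l}) (N - {l}) (TE - {{p, l}}) \<beta> f \<le> dec_edge_order E N TE \<beta> f"
    if f: "f \<in> TE - {{p, l}}" for f
  proof -
    let ?c = "SOME a. a \<in> f"
    have c: "?c \<in> f" using is_tree_some_in_edge[OF tree_delete f] .
    let ?S = "side_leaves N TE f ?c"
    have SL: "?S \<subseteq> ?L" by (rule side_leaves_subset)
    have "\<beta> ` (?S - {l}) = \<beta> ` ?S - \<beta> ` {l}"
      using bij SL l_leaf by (intro inj_on_image_set_diff) (auto simp: bij_betw_def)
    then have "\<beta> ` (?S - {l}) = \<beta> ` ?S - {\<beta> l}" by simp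
    moreover have "\<beta> ` ?S \<subseteq> E" using SL bij by (auto simp: bij_betw_def)
    moreover have "side_leaves (N - {l}) (TE - {{p, l}}) f ?c = ?S - {l}"
      using side_leaves_delete[OF _ f c] dp by simp
    ultimately show ?thesis
      unfolding dec_edge_order_def using cut_order_delete_arc[OF finE] by simp
  qed
  then show "dec_width (E - {\<beta> l}) (N - {l}) (TE - {{p, l}}) \<beta> \<le> dec_width E N TE \<beta>"
    by (intro dec_width_le_if_edge_orders_le[OF finite_TE]) auto
qed

lemma two_node_tree:
  assumes "tdeg TE p = 1"
  shows "N = {p, l}"
proof -
  have "{l, p} \<in> TE" using pendant_edge by (simp add: insert_commute)
  then have up: "\<forall>e\<in>TE. p \<in> e \<longrightarrow> e = {l, p}" using tdeg_le1_unique_edge[OF finite_TE] assms by simp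
  have "v \<in> {p, l}" if "v \<in> N" for v
  proof (rule tadj_rtrancl_closed)
    show "(l, v) \<in> (tadj TE)\<^sup>*" using is_tree_connected[OF tree l_in_N that] .
    show "w \<in> {p, l}" if "{u, w} \<in> TE" "u \<in> {p, l}" for u w
    proof -
      have "{u, w} = {p, l} \<or> {u, w} = {l, p}"
        using bspec[OF pendant that(1)] bspec[OF up that(1)] that(2) by auto
      then have "{u, w} \<subseteq> {p, l}" by blast
      then show ?thesis by blast
    qed
  qed simp
  then show ?thesis using p_in_N l_in_N by blast
qed

end

lemma arc_dbd_delete_arc:
  assumes "is_arc_dbd E N TE \<beta>" "a \<in> E" "E - {a} \<noteq> {}"
  shows "\<exists>N' TE' \<beta>'. is_arc_dbd (E - {a}) N' TE' \<beta>' \<and> dec_width (E - {a}) N' TE' \<beta>' \<le> dec_width E N TE \<beta>"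
  using assms
proof (induction "card N" arbitrary: N TE \<beta> rule: less_induct)
  case less
  let ?L = "tleaves N TE"
  have T: "is_tree N TE" and deg: "\<forall>v\<in>N. tdeg TE v \<le> 3" and bij: "bij_betw \<beta> ?L E"
    using less.prems(1) unfolding is_arc_dbd_def by auto
  obtain l where l: "l \<in> ?L" "\<beta> l = a"
    using bij less.prems(2) by (metis bij_betw_imp_surj_on imageE)
  obtain l' where l': "l' \<in> ?L" "l' \<noteq> l"
    using bij less.prems(3) l by (metis Diff_iff bij_betw_imp_surj_on ex_in_conv imageE insertI1)
  then obtain p where "{p, l} \<in> TE" "\<forall>e\<in>TE. l \<in> e \<longrightarrow> e = {p, l}"
    using leaf_pendant_edge[OF T l(1)] unfolding tleaves_def by blast
  then interpret tree_pendant N TE p l using T by unfold_locales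
  have "1 \<le> tdeg TE p" "tdeg TE p \<le> 3" using tdeg_pos[OF finite_TE pendant_edge] deg p_in_N by auto
  then consider "tdeg TE p = 1" | "tdeg TE p = 2" | "tdeg TE p = 3" by linarith
  then show ?case
  proof cases
    case 1
    text \<open>The tree is a single edge, so \<^term>\<open>E - {a}\<close> is a single arc.\<close>
    have "?L - {l} = {p}" using two_node_tree[OF 1] l' p_neq_l unfolding tleaves_def by auto
    moreover have "\<beta> ` (?L - {l}) = E - {a}"
      using bij_betw_Diff_singleton[OF bij l(1)] l(2) by (simp add: bij_betw_def)
    ultimately have "E - {a} = {\<beta> p}" by simp
    then show ?thesis using single_arc_dbd by (metis le0)
  next
    case 2
    text \<open>Absorbing the pendant leaf gives a smaller decomposition of the same arc set.\<close>
    have "card (N - {l}) < card N" using is_tree_finite_nodes[OF T] l_in_N by (rule card_Diff1_less)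
    then show ?thesis
      using less.hyps[OF _ dbd_absorb_pendant(1)[OF less.prems(1) 2] less.prems(2,3)]
        dbd_absorb_pendant(2)[OF less.prems(1) 2] order_trans by blast
  next
    case 3
    then show ?thesis using dbd_delete_pendant[OF less.prems(1)] l(2) by blast
  qed
qed

section \<open>Adding a twin arc does not increase the width\<close>

lemma tadj_rtrancl_subdivide:
  assumes "(u, v) \<in> (tadj G)\<^sup>*" "G - {{p, l}} \<subseteq> G'" "{p, m} \<in> G'" "{m, l} \<in> G'"
  shows "(u, v) \<in> (tadj G')\<^sup>*"
  using assms(1)
proof (induction rule: rtrancl_induct)
  case base
  then show ?case by simp
next
  case (step y z)
  have yz: "{y, z} \<in> G" using step(2) unfolding tadj_def by simp
  show ?case
  proof (cases "{y, z} = {p, l}")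
    case True
    then have "(y, m) \<in> tadj G' \<and> (m, z) \<in> tadj G'"
      using assms(3,4) unfolding tadj_def by (auto simp: doubleton_eq_iff insert_commute)
    then show ?thesis using step.IH by (meson rtrancl_into_rtrancl)
  next
    case False
    then have "(y, z) \<in> tadj G'" using yz assms(2) unfolding tadj_def by blast
    then show ?thesis using step.IH by (rule rtrancl_into_rtrancl[rotated])
  qed
qed

lemma tadj_rtrancl_map:
  assumes "(u, v) \<in> (tadj G)\<^sup>*" "\<And>x y. {x, y} \<in> G \<Longrightarrow> h x = h y \<or> {h x, h y} \<in> G'"
  shows "(h u, h v) \<in> (tadj G')\<^sup>*"
  using assms(1)
proof (induction rule: rtrancl_induct)
  case (step y z)
  then have "h y = h z \<or> (h y, h z) \<in> tadj G'" using assms(2) unfolding tadj_def by simp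
  then show ?case using step.IH rtrancl_into_rtrancl by fastforce
qed simp

definition graft_nodes :: "nat set \<Rightarrow> nat \<Rightarrow> nat \<Rightarrow> nat set" where
  "graft_nodes N m l' = insert m (insert l' N)"

definition graft_edges :: "nat set set \<Rightarrow> nat \<Rightarrow> nat \<Rightarrow> nat \<Rightarrow> nat \<Rightarrow> nat set set" where
  "graft_edges TE p l m l' = insert {p, m} (insert {m, l} (insert {m, l'} (TE - {{p, l}})))"

locale tree_graft = tree_pendant +
  fixes m l' :: nat
  assumes m_notin: "m \<notin> N" and l'_notin: "l' \<notin> N" and m_neq_l': "m \<noteq> l'"
begin

abbreviation "N' \<equiv> graft_nodes N m l'"
abbreviation "TE' \<equiv> graft_edges TE p l m l'"

lemma new_neqs: "m \<noteq> p" "m \<noteq> l" "l' \<noteq> p" "l' \<noteq> l"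
  using p_in_N l_in_N m_notin l'_notin by auto

lemma new_notin_old_edge: "f \<in> TE \<Longrightarrow> m \<notin> f" "f \<in> TE \<Longrightarrow> l' \<notin> f"
  using is_tree_edge_nodes[OF tree] m_notin l'_notin by blast+

lemma new_edges_notin: "{p, m} \<notin> TE" "{m, l} \<notin> TE" "{m, l'} \<notin> TE"
  using new_notin_old_edge(1) by blast+

lemma new_edges_distinct: "{p, m} \<noteq> {m, l}" "{p, m} \<noteq> {m, l'}" "{m, l} \<noteq> {m, l'}"
  using p_neq_l new_neqs m_neq_l' by (simp_all add: doubleton_eq_iff)

lemma graft_edges_cases:
  assumes "f \<in> TE'"
  obtains "f = {p, m}" | "f = {m, l}" | "f = {m, l'}" | "f \<in> TE" "f \<noteq> {p, l}"
  using assms unfolding graft_edges_def by blast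

lemma old_edge_in_graft: "f \<in> TE \<Longrightarrow> f \<noteq> {p, l} \<Longrightarrow> f \<in> TE'"
  unfolding graft_edges_def by simp

lemma new_edges_in_graft: "{p, m} \<in> TE'" "{m, l} \<in> TE'" "{m, l'} \<in> TE'"
  unfolding graft_edges_def by simp_all

lemma finite_graft_edges: "finite TE'"
  unfolding graft_edges_def using finite_TE by simp

lemma pendant_l'_graft: "\<forall>f\<in>TE'. l' \<in> f \<longrightarrow> f = {m, l'}"
proof (intro ballI impI)
  fix f assume "f \<in> TE'" "l' \<in> f"
  then show "f = {m, l'}"
    by (cases rule: graft_edges_cases) (use new_neqs m_neq_l' new_notin_old_edge in auto)
qed

lemma pendant_l_graft: "\<forall>f\<in>TE'. l \<in> f \<longrightarrow> f = {m, l}"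
proof (intro ballI impI)
  fix f assume "f \<in> TE'" "l \<in> f"
  then show "f = {m, l}"
    by (cases rule: graft_edges_cases) (use new_neqs p_neq_l pendant in auto)
qed

lemma tdeg_graft: "tdeg TE' v = (if v = m then 3 else if v = l' then 1 else tdeg TE v)"
proof -
  consider "v = m" | "v = l'" | "v = p" | "v \<notin> {m, l', p}" by blast
  then show ?thesis
  proof cases
    case 1
    have "{f\<in>TE'. m \<in> f} = {{p, m}, {m, l}, {m, l'}}"
      using new_notin_old_edge(1) new_edges_in_graft by (auto elim: graft_edges_cases)
    then show ?thesis unfolding tdeg_def using 1 new_edges_distinct by simp
  next
    case 2
    then show ?thesis
      unfolding 2 tdeg_def pendant_edges[OF new_edges_in_graft(3) pendant_l'_graft] using m_neq_l' by simp
  next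
    case 3
    have fin: "finite {f\<in>TE. p \<in> f}" using finite_TE by simp
    have "{f\<in>TE'. p \<in> f} = insert {p, m} ({f\<in>TE. p \<in> f} - {{p, l}})"
      using new_neqs new_edges_in_graft old_edge_in_graft p_neq_l
      by (auto elim: graft_edges_cases)
    moreover have "{p, m} \<notin> {f\<in>TE. p \<in> f} - {{p, l}}" using new_edges_notin by simp
    ultimately have "card {f\<in>TE'. p \<in> f} = Suc (card ({f\<in>TE. p \<in> f} - {{p, l}}))"
      using fin by simp
    also have "\<dots> = card {f\<in>TE. p \<in> f}"
      using pendant_edge by (intro card_Suc_Diff1[OF fin]) simp
    finally have "card {f\<in>TE'. p \<in> f} = card {f\<in>TE. p \<in> f}" .
    then show ?thesis unfolding tdeg_def using 3 new_neqs by simp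
  next
    case 4
    show ?thesis
    proof (cases "v = l")
      case True
      have "tdeg TE' l = tdeg TE l"
        unfolding tdeg_def pendant_edges[OF new_edges_in_graft(2) pendant_l_graft]
          pendant_edges[OF pendant_edge pendant] by simp
      then show ?thesis using True new_neqs by simp
    next
      case False
      then have "{f\<in>TE'. v \<in> f} = {f\<in>TE. v \<in> f}"
        using 4 old_edge_in_graft by (auto elim: graft_edges_cases)
      then show ?thesis unfolding tdeg_def using 4 by simp
    qed
  qed
qed

lemma tleaves_graft: "tleaves N' TE' = insert l' (tleaves N TE)"
  using tdeg_graft m_notin m_neq_l' unfolding tleaves_def graft_nodes_def by auto

lemma tree_graft: "is_tree N' TE'"
  unfolding is_tree_def
proof (intro conjI ballI)
  show "finite N'" using is_tree_finite_nodes[OF tree] unfolding graft_nodes_def by simp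
  show "N' \<noteq> {}" unfolding graft_nodes_def by simp
next
  fix f assume "f \<in> TE'"
  then have "card f = 2 \<and> f \<subseteq> N'"
    by (cases rule: graft_edges_cases)
      (use new_neqs m_neq_l' p_in_N l_in_N tree in \<open>auto simp: is_tree_def graft_nodes_def\<close>)
  then show "card f = 2" "f \<subseteq> N'" by simp_all
next
  have sub: "TE - {{p, l}} \<subseteq> TE'" unfolding graft_edges_def by blast
  have "(p, v) \<in> (tadj TE')\<^sup>*" if "v \<in> N'" for v
  proof -
    have pm: "(p, m) \<in> tadj TE'" and ml': "(m, l') \<in> tadj TE'"
      using new_edges_in_graft unfolding tadj_def by simp_all
    have "v = m \<or> v = l' \<or> v \<in> N" using that unfolding graft_nodes_def by blast
    then consider "v = m" | "v = l'" | "v \<in> N" by blast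
    then show ?thesis
    proof cases
      case 3
      then show ?thesis using is_tree_connected[OF tree p_in_N]
        by (blast intro: tadj_rtrancl_subdivide[OF _ sub new_edges_in_graft(1,2)])
    qed (use pm ml' in \<open>auto intro: rtrancl_into_rtrancl\<close>)
  qed
  then show "(x, y) \<in> (tadj TE')\<^sup>*" if "x \<in> N'" "y \<in> N'" for x y
    using that tadj_rtrancl_sym by (meson rtrancl_trans)
next
  have "card TE' = card TE - 1 + 3"
    unfolding graft_edges_def using finite_TE pendant_edge new_edges_notin new_edges_distinct by simp
  moreover have "card N' = card N + 2"
    unfolding graft_nodes_def using m_notin l'_notin m_neq_l' is_tree_finite_nodes[OF tree] by simp
  moreover have "card TE = card N - 1" "card TE \<ge> 1"
    using tree pendant_edge finite_TE unfolding is_tree_def by (auto simp: Suc_leI card_gt_0_iff)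
  ultimately show "card TE' = card N' - 1" by simp
qed

text \<open>Contracting the new nodes onto \<open>l\<close> maps paths of the grafted tree to paths of the
  original tree.\<close>
definition contract :: "nat \<Rightarrow> nat" where
  "contract v = (if v = m \<or> v = l' then l else v)"

lemma tadj_rtrancl_contract:
  assumes "(u, v) \<in> (tadj G)\<^sup>*" "G \<subseteq> TE'" "(TE - {{p, l}}) \<inter> G \<subseteq> G'"
    and "{p, m} \<in> G \<Longrightarrow> {p, l} \<in> G'"
  shows "(contract u, contract v) \<in> (tadj G')\<^sup>*"
proof (rule tadj_rtrancl_map[OF assms(1)])
  fix x y assume xy: "{x, y} \<in> G"
  then have "{x, y} \<in> TE'" using assms(2) by blast
  then show "contract x = contract y \<or> {contract x, contract y} \<in> G'"
  proof (cases rule: graft_edges_cases)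
    case 1
    then show ?thesis using xy assms(4) new_neqs unfolding contract_def
      by (auto simp: doubleton_eq_iff insert_commute)
  next
    case 4
    then have "x \<in> N" "y \<in> N" using is_tree_edge_nodes[OF tree] by blast+
    then show ?thesis using xy 4 assms(3) m_notin l'_notin unfolding contract_def by auto
  qed (auto simp: contract_def doubleton_eq_iff)
qed

lemma contract_old: "v \<in> N \<Longrightarrow> contract v = v"
  using m_notin l'_notin unfolding contract_def by auto

lemma side_leaves_graft_m: "side_leaves N' TE' {p, m} m = {l', l}"
proof -
  let ?G = "TE' - {{p, m}}"
  have "(l, contract v) \<in> (tadj (TE - {{p, l}}))\<^sup>*" if "(m, v) \<in> (tadj ?G)\<^sup>*" for v
    using tadj_rtrancl_contract[OF that, of "TE - {{p, l}}"] unfolding contract_def by auto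
  then have "contract v = l" if "(m, v) \<in> (tadj ?G)\<^sup>*" for v
    using that tadj_rtrancl_isolated l_isolated by blast
  then have "v \<in> {m, l', l}" if "(m, v) \<in> (tadj ?G)\<^sup>*" for v
  proof -
    have "contract v = l" using that by fact
    then show ?thesis unfolding contract_def by (auto split: if_splits)
  qed
  moreover have "(m, l') \<in> tadj ?G" "(m, l) \<in> tadj ?G"
    using new_edges_in_graft new_edges_distinct unfolding tadj_def by (auto simp: insert_commute)
  moreover have "m \<notin> insert l' (tleaves N TE)" using m_notin m_neq_l' unfolding tleaves_def by simp
  ultimately show ?thesis unfolding side_leaves_def tleaves_graft using l_leaf by auto
qed

lemma side_leaves_graft_p: "side_leaves N' TE' {p, m} p = tleaves N TE - {l}"
proof -
  let ?G = "TE' - {{p, m}}"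
  have sub: "TE - {{p, l}} \<subseteq> ?G" using old_edge_in_graft new_edges_notin by blast
  have "(p, contract v) \<in> (tadj (TE - {{p, l}}))\<^sup>*" if "(p, v) \<in> (tadj ?G)\<^sup>*" for v
    using tadj_rtrancl_contract[OF that, of "TE - {{p, l}}"] contract_old[OF p_in_N] by auto
  then have "v \<notin> {m, l', l}" if "(p, v) \<in> (tadj ?G)\<^sup>*" for v
    using that tadj_rtrancl_isolated[OF l_isolated] p_neq_l unfolding contract_def by fastforce
  moreover have "(p, v) \<in> (tadj ?G)\<^sup>*" if "v \<in> tleaves N TE - {l}" for v
    using pendant_side_leaves(2)[OF tree pendant_edge pendant] that tadj_rtrancl_mono[OF sub]
    unfolding side_leaves_def by blast
  ultimately show ?thesis unfolding side_leaves_def tleaves_graft by auto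
qed

lemma side_leaves_graft_old:
  assumes f: "f \<in> TE" "f \<noteq> {p, l}" and c: "c \<in> f"
  shows "side_leaves N' TE' f c = side_leaves N TE f c \<union> (if l \<in> side_leaves N TE f c then {l'} else {})"
proof -
  let ?R = "(tadj (TE - {f}))\<^sup>*" and ?R' = "(tadj (TE' - {f}))\<^sup>*"
  have cN: "c \<in> N" using is_tree_edge_nodes[OF tree f(1) c] .
  have sub: "TE - {f} - {{p, l}} \<subseteq> TE' - {f}" using old_edge_in_graft by blast
  have new: "{p, m} \<in> TE' - {f}" "{m, l} \<in> TE' - {f}" "{m, l'} \<in> TE' - {f}"
    using new_edges_in_graft f(1) new_edges_notin by auto
  have contracted: "(c, contract v) \<in> ?R" if "(c, v) \<in> ?R'" for v
    using tadj_rtrancl_contract[OF that, of "TE - {f}"] contract_old[OF cN] pendant_edge f by auto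
  have subdivided: "(c, v) \<in> ?R'" if "(c, v) \<in> ?R" for v
    by (rule tadj_rtrancl_subdivide[OF that sub new(1,2)])
  have "(l, m) \<in> tadj (TE' - {f})" "(m, l') \<in> tadj (TE' - {f})"
    using new(2,3) unfolding tadj_def by (simp_all add: insert_commute)
  then have "(l, l') \<in> ?R'" by (meson r_into_rtrancl rtrancl_into_rtrancl)
  then have l': "(c, l') \<in> ?R' \<longleftrightarrow> (c, l) \<in> ?R"
    using contracted[of l'] subdivided[of l] unfolding contract_def by (auto intro: rtrancl_trans)
  have old: "(c, v) \<in> ?R' \<longleftrightarrow> (c, v) \<in> ?R" if "v \<in> tleaves N TE" for v
    using contracted[of v] subdivided[of v] contract_old that unfolding tleaves_def by auto
  have "l' \<notin> tleaves N TE" using l'_notin unfolding tleaves_def by simp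
  then show ?thesis
    unfolding side_leaves_def tleaves_graft using l' old l_leaf by auto
qed

end

context tree_graft
begin

context
  fixes E :: "('a \<times> 'a) set" and \<beta> :: "nat \<Rightarrow> 'a \<times> 'a" and a b :: "'a \<times> 'a"
  assumes D: "is_arc_dbd (E - {a}) N TE \<beta>" and aE: "a \<in> E" and bE: "b \<in> E"
    and twin: "twin_arcs E a b" and finE: "finite E" and \<beta>l: "\<beta> l = b"
begin

abbreviation "\<beta>' \<equiv> \<beta>(l' := a)"

lemma bij_graft: "bij_betw \<beta> (tleaves N TE) (E - {a})"
  using D unfolding is_arc_dbd_def by simp

lemma l'_notin_leaves: "l' \<notin> tleaves N TE"
  using l'_notin unfolding tleaves_def by simp

lemma dbd_graft: "is_arc_dbd E N' TE' \<beta>'"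
proof -
  have "bij_betw \<beta>' (insert l' (tleaves N TE)) (insert a (E - {a}))"
    using bij_graft l'_notin_leaves by (intro bij_betw_fun_upd_insert) auto
  moreover have "\<forall>v\<in>N'. tdeg TE' v \<le> 3"
    using D tdeg_graft unfolding is_arc_dbd_def graft_nodes_def by auto
  ultimately show ?thesis
    unfolding is_arc_dbd_def tleaves_graft using tree_graft aE by (simp add: insert_absorb)
qed

lemma dec_edge_order_graft_new:
  assumes "f \<in> {{p, m}, {m, l}, {m, l'}}"
  shows "dec_edge_order E N' TE' \<beta>' f \<le> cut_order (E - {a}) {b}"
proof -
  have ab: "{a, b} \<subseteq> E" "a \<noteq> b" using aE bE twin unfolding twin_arcs_def by auto
  have \<beta>': "\<beta>' l = b" "\<beta>' l' = a" using \<beta>l new_neqs by simp_all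
  have "\<beta>' ` (tleaves N TE - {l}) = \<beta> ` (tleaves N TE - {l})"
    using l'_notin_leaves by (intro image_cong) auto
  also have "\<dots> = E - {a, b}"
    using bij_betw_Diff_singleton[OF bij_graft l_leaf] \<beta>l by (auto simp: bij_betw_def)
  finally have "cut_order E (\<beta>' ` side_leaves N' TE' {p, m} p) = cut_order E {a, b}"
    unfolding side_leaves_graft_p using cut_order_Diff[OF ab(1)] by simp
  moreover have "cut_order E (\<beta>' ` side_leaves N' TE' {p, m} m) = cut_order E {a, b}"
    unfolding side_leaves_graft_m using \<beta>l new_neqs by (simp add: insert_commute)
  moreover have "(SOME x. x \<in> {p, m}) \<in> {p, m}" by (rule someI[of _ p]) simp
  ultimately have "dec_edge_order E N' TE' \<beta>' {p, m} = cut_order E {a, b}"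
    unfolding dec_edge_order_def by auto
  moreover have "dec_edge_order E N' TE' \<beta>' {m, l} = cut_order E {b}"
    using pendant_dec_edge_order[OF dbd_graft new_edges_in_graft(2) pendant_l_graft] \<beta>' by simp
  moreover have "dec_edge_order E N' TE' \<beta>' {m, l'} = cut_order E {a}"
    using pendant_dec_edge_order[OF dbd_graft new_edges_in_graft(3) pendant_l'_graft] \<beta>' by simp
  moreover have "cut_order E {a, b} \<le> cut_order (E - {a}) {b}"
    using twin_arcs_cut_order[OF finE twin aE bE, of "{b}"] ab bE by simp
  moreover have "cut_order E {a} \<le> cut_order (E - {a}) {b}" "cut_order E {b} \<le> cut_order (E - {a}) {b}"
    using twin_arcs_single_cut_order[OF finE twin aE bE] by simp_all
  ultimately show ?thesis using assms by auto
qed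

lemma dec_edge_order_graft_old:
  assumes f: "f \<in> TE" "f \<noteq> {p, l}"
  shows "dec_edge_order E N' TE' \<beta>' f \<le> dec_edge_order (E - {a}) N TE \<beta> f"
proof -
  let ?c = "SOME x. x \<in> f"
  let ?S = "side_leaves N TE f ?c"
  have c: "?c \<in> f" by (rule is_tree_some_in_edge[OF tree f(1)])
  have SL: "?S \<subseteq> tleaves N TE" by (rule side_leaves_subset)
  have XE: "\<beta> ` ?S \<subseteq> E - {a}" using SL bij_graft unfolding bij_betw_def by blast
  have "b \<in> \<beta> ` ?S \<longleftrightarrow> l \<in> ?S"
    using inj_on_image_mem_iff[of \<beta> "tleaves N TE" l ?S] bij_graft l_leaf SL \<beta>l
    by (simp add: bij_betw_def)
  moreover have "\<beta>' ` ?S = \<beta> ` ?S" using SL l'_notin_leaves by (intro image_cong) auto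
  ultimately have "\<beta>' ` side_leaves N' TE' f ?c = (if b \<in> \<beta> ` ?S then insert a (\<beta> ` ?S) else \<beta> ` ?S)"
    unfolding side_leaves_graft_old[OF f c] by auto
  then show ?thesis
    unfolding dec_edge_order_def using twin_arcs_cut_order[OF finE twin aE bE XE] by simp
qed

lemma dec_width_graft: "dec_width E N' TE' \<beta>' \<le> dec_width (E - {a}) N TE \<beta>"
proof (rule dec_width_le[OF finite_graft_edges])
  let ?W = "dec_width (E - {a}) N TE \<beta>"
  have "dec_edge_order (E - {a}) N TE \<beta> {p, l} \<le> ?W"
    by (rule dec_edge_order_le_width[OF finite_TE pendant_edge])
  then have new: "cut_order (E - {a}) {b} \<le> ?W"
    using pendant_dec_edge_order[OF D pendant_edge pendant] \<beta>l by simp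
  fix f assume "f \<in> TE'"
  then consider "f \<in> {{p, m}, {m, l}, {m, l'}}" | "f \<in> TE" "f \<noteq> {p, l}"
    by (cases rule: graft_edges_cases) auto
  then show "dec_edge_order E N' TE' \<beta>' f \<le> ?W"
  proof cases
    case 1
    then show ?thesis using dec_edge_order_graft_new new by (meson order_trans)
  next
    case 2
    then show ?thesis using dec_edge_order_graft_old dec_edge_order_le_width[OF finite_TE]
      by (meson order_trans)
  qed
qed

end

end

lemma two_arc_dbd:
  assumes "a \<noteq> b"
  shows "is_arc_dbd {a, b} {0, 1} {{0, 1}} (\<lambda>v. if v = 0 then a else b)"
    and "dec_width {a, b} {0, 1} {{0, 1}} (\<lambda>v. if v = 0 then a else b) = cut_order {a, b} {a}"
proof -
  let ?\<beta> = "\<lambda>v::nat. if v = 0 then a else b"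
  have deg: "tdeg {{0::nat, 1}} v = (if v \<in> {0, 1} then 1 else 0)" for v
  proof -
    have "{e\<in>{{0::nat, 1}}. v \<in> e} = (if v \<in> {0, 1} then {{0, 1}} else {})" by auto
    then show ?thesis unfolding tdeg_def by simp
  qed
  have "(0, 1) \<in> tadj {{0::nat, 1}}" "(1, 0) \<in> tadj {{0::nat, 1}}"
    unfolding tadj_def by (simp_all add: insert_commute)
  then have "is_tree {0::nat, 1} {{0, 1}}" unfolding is_tree_def by auto
  moreover have "tleaves {0, 1} {{0::nat, 1}} = {0, 1}" unfolding tleaves_def using deg by auto
  moreover have "bij_betw ?\<beta> {0::nat, 1} {a, b}" unfolding bij_betw_def inj_on_def using assms by auto
  ultimately show D: "is_arc_dbd {a, b} {0, 1} {{0, 1}} ?\<beta>" unfolding is_arc_dbd_def using deg by simp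
  have "dec_edge_order {a, b} {0, 1} {{0, 1}} ?\<beta> {1, 0} = cut_order {a, b} {a}"
    using pendant_dec_edge_order[OF D, of 1 0] by (simp add: insert_commute)
  then show "dec_width {a, b} {0, 1} {{0, 1}} ?\<beta> = cut_order {a, b} {a}"
    unfolding dec_width_def by (simp add: insert_commute)
qed

lemma arc_dbd_add_twin:
  assumes D: "is_arc_dbd (E - {a}) N TE \<beta>" and aE: "a \<in> E" and bE: "b \<in> E"
    and twin: "twin_arcs E a b" and finE: "finite E"
  shows "\<exists>N' TE' \<beta>'. is_arc_dbd E N' TE' \<beta>' \<and> dec_width E N' TE' \<beta>' \<le> dec_width (E - {a}) N TE \<beta>"
proof -
  let ?L = "tleaves N TE"
  have T: "is_tree N TE" and bij: "bij_betw \<beta> ?L (E - {a})"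
    using D unfolding is_arc_dbd_def by auto
  have ab: "a \<noteq> b" using twin unfolding twin_arcs_def by simp
  obtain l where l: "l \<in> ?L" "\<beta> l = b"
    using bij bE ab by (metis Diff_iff bij_betw_imp_surj_on imageE singletonD)
  show ?thesis
  proof (cases "N = {l}")
    case True
    text \<open>A single arc is left; the two twins form a decomposition of width 0.\<close>
    then have "?L = {l}" using l(1) unfolding tleaves_def by auto
    then have "E - {a} = {b}" using bij l(2) unfolding bij_betw_def by simp
    then have E: "E = {a, b}" using aE by blast
    have "cut_order E {a} \<le> cut_order {b} {b}"
      using twin_arcs_single_cut_order[OF finE twin aE bE, of a] \<open>E - {a} = {b}\<close> by simp
    also have "\<dots> = 0" unfolding cut_order_def cut_vertices_def by simp
    finally have "dec_width E {0, 1} {{0, 1}} (\<lambda>v. if v = 0 then a else b) = 0"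
      using two_arc_dbd(2)[OF ab] unfolding E by simp
    then show ?thesis using two_arc_dbd(1)[OF ab] unfolding E[symmetric]
      by (intro exI[of _ "{0, 1}"] exI[of _ "{{0, 1}}"] exI[of _ "\<lambda>v. if v = 0 then a else b"]) simp
  next
    case False
    then obtain v where "v \<in> N" "v \<noteq> l" using l(1) unfolding tleaves_def by blast
    then obtain p where e: "{p, l} \<in> TE" and u: "\<forall>e\<in>TE. l \<in> e \<longrightarrow> e = {p, l}"
      using leaf_pendant_edge[OF T l(1)] by blast
    have new: "Suc (Max N) \<notin> N" "Suc (Suc (Max N)) \<notin> N"
      using Max_ge[OF is_tree_finite_nodes[OF T]] by (meson Suc_n_not_le_n le_Suc_eq)+
    interpret tree_graft N TE p l "Suc (Max N)" "Suc (Suc (Max N))"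
      by (intro tree_graft.intro tree_pendant.intro tree_graft_axioms.intro T e u new) simp
    show ?thesis
      using dbd_graft[OF D aE bE twin finE l(2)] dec_width_graft[OF D aE bE twin finE l(2)] by blast
  qed
qed

lemma arc_dbw_remove_twin:
  assumes "finite E" "twin_arcs E a b" "a \<in> E" "b \<in> E"
  shows "arc_dbw (E - {a}) = arc_dbw E"
proof (rule arc_dbw_eqI)
  have "a \<noteq> b" using assms(2) unfolding twin_arcs_def by simp
  then show "E - {a} = {} \<longleftrightarrow> E = {}" using assms(3,4) by blast
  then show "\<exists>N' TE' \<beta>'. is_arc_dbd (E - {a}) N' TE' \<beta>' \<and> dec_width (E - {a}) N' TE' \<beta>' \<le> dec_width E N TE \<beta>"
    if "is_arc_dbd E N TE \<beta>" for N TE \<beta>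
    using arc_dbd_delete_arc[OF that assms(3)] assms(3) by blast
qed (use arc_dbd_add_twin assms in blast)

lemma arc_dbw_remove_twins:
  assumes finE: "finite E" and RE: "R \<subseteq> E" and twins: "\<forall>r\<in>R. \<exists>t\<in>E - R. twin_arcs E r t"
  shows "arc_dbw (E - R) = arc_dbw E"
proof -
  have "arc_dbw (E - F) = arc_dbw E" if "F \<subseteq> R" for F
    using finite_subset[OF that finite_subset[OF RE finE]] that
  proof (induction F rule: finite_induct)
    case (insert r F)
    then have rE: "r \<in> E - F" using RE by blast
    obtain t where t: "t \<in> E - R" "twin_arcs E r t" using twins insert.prems by blast
    then have "twin_arcs (E - F) r t" using twin_arcs_subset by blast
    then have "arc_dbw (E - F - {r}) = arc_dbw (E - F)"
      using arc_dbw_remove_twin finE rE t(1) insert.prems by blast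
    moreover have "E - insert r F = E - F - {r}" by blast
    ultimately show ?case using insert.IH insert.prems by simp
  qed simp
  then show ?thesis by simp
qed

section \<open>Identifying two sources or two sinks\<close>

definition merge :: "'a \<Rightarrow> 'a \<Rightarrow> 'a \<Rightarrow> 'a \<Rightarrow> 'a" where
  "merge x y g v = (if v = x \<or> v = y then g else v)"

lemma merge_eqD:
  "g \<notin> A - {x, y} \<Longrightarrow> u \<in> A \<Longrightarrow> v \<in> A \<Longrightarrow> merge x y g u = merge x y g v \<Longrightarrow>
    u = v \<or> (u \<in> {x, y} \<and> v \<in> {x, y})"
  unfolding merge_def by (auto split: if_splits)

lemma arcs_identify:
  assumes sep: "\<forall>(u, w)\<in>E. u \<notin> {x, y} \<or> w \<notin> {x, y}"
  shows "snd (identify (V, E) x y g) = map_prod (merge x y g) (merge x y g) ` E"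
proof -
  let ?\<phi> = "merge x y g"
  have arcs: "snd (identify (V, E) x y g) = {(u, w). (u, w) \<in> E \<and> u \<notin> {x, y} \<and> w \<notin> {x, y}}
      \<union> {(u, g) | u. \<exists>z\<in>{x, y}. (u, z) \<in> E} \<union> {(g, w) | w. \<exists>z\<in>{x, y}. (z, w) \<in> E}"
    unfolding identify_def in_nbhd_def out_nbhd_def by auto
  have merge_id: "?\<phi> v = v" if "v \<notin> {x, y}" for v using that unfolding merge_def by simp
  have merge_g: "?\<phi> v = g" if "v \<in> {x, y}" for v using that unfolding merge_def by auto
  show ?thesis
  proof
    show "snd (identify (V, E) x y g) \<subseteq> map_prod ?\<phi> ?\<phi> ` E"
    proof
      fix q assume "q \<in> snd (identify (V, E) x y g)"
      then consider (old) u w where "q = (u, w)" "(u, w) \<in> E" "u \<notin> {x, y}" "w \<notin> {x, y}"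
        | (head) u z where "q = (u, g)" "z \<in> {x, y}" "(u, z) \<in> E"
        | (tail) w z where "q = (g, w)" "z \<in> {x, y}" "(z, w) \<in> E"
        unfolding arcs by blast
      then show "q \<in> map_prod ?\<phi> ?\<phi> ` E"
      proof cases
        case old
        then show ?thesis using merge_id by (metis map_prod_simp rev_image_eqI)
      next
        case head
        then have "q = map_prod ?\<phi> ?\<phi> (u, z)" using sep merge_id merge_g by fastforce
        then show ?thesis using head(3) by blast
      next
        case tail
        then have "q = map_prod ?\<phi> ?\<phi> (z, w)" using sep merge_id merge_g by fastforce
        then show ?thesis using tail(3) by blast
      qed
    qed
    show "map_prod ?\<phi> ?\<phi> ` E \<subseteq> snd (identify (V, E) x y g)"
    proof clarify
      fix u w assume uw: "(u, w) \<in> E"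
      consider "u \<in> {x, y}" "w \<notin> {x, y}" | "u \<notin> {x, y}" "w \<in> {x, y}" | "u \<notin> {x, y}" "w \<notin> {x, y}"
        using sep uw by blast
      then show "(?\<phi> u, ?\<phi> w) \<in> snd (identify (V, E) x y g)"
        by cases (use uw merge_id merge_g in \<open>auto simp: arcs\<close>)
    qed
  qed
qed

lemma arc_dbw_merge_sources:
  assumes finE: "finite E" and xy: "x \<noteq> y" and src: "x \<notin> Range E" "y \<notin> Range E"
    and g: "g \<notin> Field E - {x, y}"
  shows "arc_dbw (map_prod (merge x y g) (merge x y g) ` E) = arc_dbw E"
proof -
  let ?\<phi> = "merge x y g" and ?\<psi> = "map_prod (merge x y g) (merge x y g)"
  text \<open>An arc from \<open>y\<close> with a parallel arc from \<open>x\<close> is a twin of it; once these are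
    removed, merging \<open>x\<close> and \<open>y\<close> is a mere renaming.\<close>
  define R where "R = {(y, w) | w. (y, w) \<in> E \<and> (x, w) \<in> E}"
  have heads: "w \<notin> {x, y}" if "(u, w) \<in> E" for u w using that src by blast
  have "arc_dbw (E - R) = arc_dbw E"
  proof (rule arc_dbw_remove_twins[OF finE])
    show "R \<subseteq> E" unfolding R_def by blast
    show "\<forall>r\<in>R. \<exists>t\<in>E - R. twin_arcs E r t"
      using xy src unfolding R_def twin_arcs_def by fastforce
  qed
  moreover have "?\<psi> ` (E - R) = ?\<psi> ` E"
  proof
    show "?\<psi> ` E \<subseteq> ?\<psi> ` (E - R)"
    proof clarify
      fix u w assume uw: "(u, w) \<in> E"
      show "(?\<phi> u, ?\<phi> w) \<in> ?\<psi> ` (E - R)"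
      proof (cases "(u, w) \<in> R")
        case True
        then have "u = y" "(x, w) \<in> E - R" using xy unfolding R_def by auto
        moreover have "?\<phi> y = ?\<phi> x" unfolding merge_def by simp
        ultimately show ?thesis by force
      qed (use uw in blast)
    qed
  qed blast
  moreover have "arc_dbw (?\<psi> ` (E - R)) = arc_dbw (E - R)"
  proof (rule arc_dbw_rename)
    show "inj_on ?\<psi> (E - R)"
    proof (rule inj_onI)
      fix q q' assume q: "q \<in> E - R" "q' \<in> E - R" "?\<psi> q = ?\<psi> q'"
      obtain u w u' w' where uw: "q = (u, w)" "q' = (u', w')" by (cases q, cases q')
      have E: "(u, w) \<in> E" "(u', w') \<in> E" and eq: "?\<phi> u = ?\<phi> u'" "?\<phi> w = ?\<phi> w'"
        using q uw by auto
      then have "w = w'" using merge_eqD[OF g, of w w'] heads by (auto simp: Field_def)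
      moreover have "u = u'"
        using merge_eqD[OF g, of u u'] E eq q uw \<open>w = w'\<close> xy unfolding R_def by (auto simp: Field_def)
      ultimately show "q = q'" using uw by simp
    qed
    show "v = w" if "v \<in> Range (E - R)" "w \<in> Domain (E - R)" "?\<phi> v = ?\<phi> w" for v w
      using that merge_eqD[OF g, of v w] src by (auto simp: Field_def)
  qed
  ultimately show ?thesis by simp
qed

lemma arc_dbw_merge_sinks:
  assumes "finite E" "x \<noteq> y" "x \<notin> Domain E" "y \<notin> Domain E" "g \<notin> Field E - {x, y}"
  shows "arc_dbw (map_prod (merge x y g) (merge x y g) ` E) = arc_dbw E"
proof -
  let ?\<psi> = "map_prod (merge x y g) (merge x y g)"
  have "?\<psi> ` E = (?\<psi> ` E\<inverse>)\<inverse>" by force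
  then have "arc_dbw (?\<psi> ` E) = arc_dbw (?\<psi> ` E\<inverse>)" by (simp add: arc_dbw_converse)
  also have "\<dots> = arc_dbw (E\<inverse>)" using assms by (intro arc_dbw_merge_sources) auto
  finally show ?thesis by (simp add: arc_dbw_converse)
qed

lemma digraph_identify:
  assumes D: "digraph (V, E)" and sep: "\<forall>(u, w)\<in>E. u \<notin> {x, y} \<or> w \<notin> {x, y}"
    and g: "g \<notin> V - {x, y}"
  shows "digraph (identify (V, E) x y g)"
proof -
  have EV: "E \<subseteq> V \<times> V" and nl: "\<forall>v. (v, v) \<notin> E" and fin: "finite V"
    using D unfolding digraph_def by auto
  have "merge x y g v \<in> insert g (V - {x, y})" if "v \<in> V" for v
    using that unfolding merge_def by auto
  then have "map_prod (merge x y g) (merge x y g) ` E \<subseteq> insert g (V - {x, y}) \<times> insert g (V - {x, y})"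
    using EV by auto
  moreover have "(v, v) \<notin> map_prod (merge x y g) (merge x y g) ` E" for v
    using merge_eqD[OF g] EV nl sep by fastforce
  ultimately show ?thesis
    unfolding digraph_def arcs_identify[OF sep] using fin by (simp add: identify_def)
qed

lemma ss_step_dbw:
  assumes D: "digraph D" and step: "ss_step D D'"
  shows "digraph D' \<and> dbw D' = dbw D"
proof -
  obtain V E where DVE: "D = (V, E)" by (cases D)
  obtain x y g where xy: "ss_identifiable D x y" and g: "g \<notin> V - {x, y}"
    and D': "D' = identify (V, E) x y g"
    using step DVE unfolding ss_step_def by auto
  have EV: "E \<subseteq> V \<times> V" and finE: "finite E"
    using D DVE unfolding digraph_def by (auto intro: finite_subset)
  then have g': "g \<notin> Field E - {x, y}" using g by (auto simp: Field_def)
  have "x \<noteq> y" using xy unfolding ss_identifiable_def by simp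
  from xy consider "x \<notin> Range E" "y \<notin> Range E" | "x \<notin> Domain E" "y \<notin> Domain E"
    unfolding ss_identifiable_def is_source_def is_sink_def in_nbhd_def out_nbhd_def DVE by auto
  then have "(\<forall>(u, w)\<in>E. u \<notin> {x, y} \<or> w \<notin> {x, y}) \<and>
      arc_dbw (map_prod (merge x y g) (merge x y g) ` E) = arc_dbw E"
  proof cases
    case 1
    then show ?thesis using arc_dbw_merge_sources[OF finE \<open>x \<noteq> y\<close> _ _ g'] by blast
  next
    case 2
    then show ?thesis using arc_dbw_merge_sinks[OF finE \<open>x \<noteq> y\<close> _ _ g'] by blast
  qed
  then have sep: "\<forall>(u, w)\<in>E. u \<notin> {x, y} \<or> w \<notin> {x, y}"
    and "arc_dbw (map_prod (merge x y g) (merge x y g) ` E) = arc_dbw E" by simp_all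
  then show ?thesis
    using digraph_identify[OF D[unfolded DVE] sep g] arcs_identify[OF sep]
    unfolding D' DVE dbw_eq_arc_dbw by simp
qed

theorem mainTheorem8:
  fixes D H :: "'a digraph"
  assumes "digraph D" and "digraph H"
    and "ss_equiv H D"
  shows "dbw H = dbw D"
proof -
  have "ss_step\<^sup>*\<^sup>* D H" using assms(3) unfolding ss_equiv_def .
  then have "digraph H \<and> dbw H = dbw D"
    by (induction rule: rtranclp_induct) (use assms(1) ss_step_dbw in auto)
  then show ?thesis by simp
qed

end
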